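(* Let $\epsilon\in(0,1)$, $u_0\in\mathbb{R}\setminus\{0,1,-1\}$, and let $h^*=\frac{2\epsilon^2}{u_0^2+|u_0|}$ if $|u_0|>1$ and $h^*=\epsilon^2$ if $0<|u_0|<1$. For every $h\in(0,h^*]$, any real sequence $(u_n)_{n\ge0}$ starting at $u_0$ and satisfying the Crank–Nicolson scheme $$\frac{u_n-u_{n-1}}{h}+\frac{1}{2\epsilon^2}\big(u_n^3-u_n\big)+\frac{1}{2\epsilon^2}\big(u_{n-1}^3-u_{n-1}\big)=0,\qquad n\ge1,$$ satisfies $E(u_n)\le E(u_{n-1})$ for all $n\ge1$, where $E(v)=\frac{1}{4\epsilon^2}(v^2-1)^2$.
   Context: The scheme discretizes the ODE $u'(t)+\frac{1}{\epsilon^2}(u^3-u)=0$, $u(0)=u_0$. For $h\le2\epsilon^2$ each step equation has a unique real solution. *)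

theory Defs
  imports Complex_Main
begin

definition energy :: "real \<Rightarrow> real \<Rightarrow> real" where
  "energy \<epsilon> v = (v\<^sup>2 - 1)\<^sup>2 / (4 * \<epsilon>\<^sup>2)"

definition hstar :: "real \<Rightarrow> real \<Rightarrow> real" where
  "hstar \<epsilon> u0 = (if \<bar>u0\<bar> > 1 then 2 * \<epsilon>\<^sup>2 / (u0\<^sup>2 + \<bar>u0\<bar>) else \<epsilon>\<^sup>2)"

end

theory Submission
  imports Defs
begin

text \<open>Substituting one Crank--Nicolson step for \<open>h (a\<^sup>3 - a + b\<^sup>3 - b)\<close> in the factorisation of
  \<open>(a\<^sup>2 - 1)\<^sup>2 - (b\<^sup>2 - 1)\<^sup>2\<close> gives the discrete energy identity
  \<open>h ((a\<^sup>2 - 1)\<^sup>2 - (b\<^sup>2 - 1)\<^sup>2) = -(a - b)\<^sup>2 (4\<epsilon>\<^sup>2 + h (a\<^sup>2 - b\<^sup>2))\<close>,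
  so the energy cannot increase as long as \<open>h (b\<^sup>2 - a\<^sup>2) \<le> 4\<epsilon>\<^sup>2\<close>. The energy sublevel set of
  \<open>u\<^sub>0\<close> is contained in \<open>{v. v\<^sup>2 \<le> 1 + \<bar>u\<^sub>0\<^sup>2 - 1\<bar>}\<close>, and the choice of \<open>h\<^sup>*\<close> makes \<open>h\<close> times
  this bound at most \<open>2\<epsilon>\<^sup>2\<close>; induction keeps every iterate in the sublevel set.\<close>

lemma crank_nicolson_step_iff:
  fixes e h a b :: real
  assumes "e \<noteq> 0" "h \<noteq> 0"
  shows "(a - b) / h + (a ^ 3 - a) / (2 * e\<^sup>2) + (b ^ 3 - b) / (2 * e\<^sup>2) = 0
     \<longleftrightarrow> 2 * e\<^sup>2 * (a - b) + h * (a ^ 3 - a + b ^ 3 - b) = 0"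
proof -
  have "(a - b) / h + (a ^ 3 - a) / (2 * e\<^sup>2) + (b ^ 3 - b) / (2 * e\<^sup>2)
      = (2 * e\<^sup>2 * (a - b) + h * (a ^ 3 - a + b ^ 3 - b)) / (2 * e\<^sup>2 * h)"
    using assms by (simp add: field_simps)
  then show ?thesis
    using assms by simp
qed

lemma crank_nicolson_energy_identity:
  fixes e h a b :: real
  assumes "2 * e\<^sup>2 * (a - b) + h * (a ^ 3 - a + b ^ 3 - b) = 0"
  shows "h * ((a\<^sup>2 - 1)\<^sup>2 - (b\<^sup>2 - 1)\<^sup>2) = - ((a - b)\<^sup>2 * (4 * e\<^sup>2 + h * (a\<^sup>2 - b\<^sup>2)))"
proof -
  have "h * ((a\<^sup>2 - 1)\<^sup>2 - (b\<^sup>2 - 1)\<^sup>2)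
      = (a - b) * (2 * (h * (a ^ 3 - a + b ^ 3 - b)) - h * (a + b) * (a - b)\<^sup>2)"
    by (simp add: algebra_simps power2_eq_square power3_eq_cube)
  also have "\<dots> = (a - b) * (2 * (- 2 * e\<^sup>2 * (a - b)) - h * (a + b) * (a - b)\<^sup>2)"
    using assms by (simp add: eq_neg_iff_add_eq_0)
  also have "\<dots> = - ((a - b)\<^sup>2 * (4 * e\<^sup>2 + h * (a\<^sup>2 - b\<^sup>2)))"
    by (simp add: algebra_simps power2_eq_square)
  finally show ?thesis .
qed

lemma energy_le_iff:
  fixes e v w :: real
  assumes "e \<noteq> 0"
  shows "energy e v \<le> energy e w \<longleftrightarrow> \<bar>v\<^sup>2 - 1\<bar> \<le> \<bar>w\<^sup>2 - 1\<bar>"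
  using assms by (simp add: energy_def divide_le_cancel abs_le_square_iff)

lemma crank_nicolson_energy_le:
  fixes e h a b :: real
  assumes "e \<noteq> 0" "0 < h"
    and step: "(a - b) / h + (a ^ 3 - a) / (2 * e\<^sup>2) + (b ^ 3 - b) / (2 * e\<^sup>2) = 0"
    and small: "h * (b\<^sup>2 - a\<^sup>2) \<le> 4 * e\<^sup>2"
  shows "energy e a \<le> energy e b"
proof -
  have identity: "h * ((a\<^sup>2 - 1)\<^sup>2 - (b\<^sup>2 - 1)\<^sup>2) = - ((a - b)\<^sup>2 * (4 * e\<^sup>2 + h * (a\<^sup>2 - b\<^sup>2)))"
    using step assms(1,2) by (intro crank_nicolson_energy_identity) (simp add: crank_nicolson_step_iff)
  have "0 \<le> 4 * e\<^sup>2 + h * (a\<^sup>2 - b\<^sup>2)"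
    using small by (simp add: algebra_simps)
  then have "h * ((a\<^sup>2 - 1)\<^sup>2 - (b\<^sup>2 - 1)\<^sup>2) \<le> 0"
    unfolding identity by simp
  then have "(a\<^sup>2 - 1)\<^sup>2 \<le> (b\<^sup>2 - 1)\<^sup>2"
    using \<open>0 < h\<close> by (simp add: mult_le_0_iff)
  then show ?thesis
    using assms(1) by (simp add: energy_le_iff abs_le_square_iff)
qed

lemma hstar_step_bound:
  fixes e h u0 :: real
  assumes "0 \<le> h" "h \<le> hstar e u0"
  shows "h * (1 + \<bar>u0\<^sup>2 - 1\<bar>) \<le> 2 * e\<^sup>2"
proof (cases "\<bar>u0\<bar> > 1")
  case True
  then have "1 < \<bar>u0\<bar>\<^sup>2"
    by (intro one_less_power) auto
  then have "h * (1 + \<bar>u0\<^sup>2 - 1\<bar>) \<le> h * (u0\<^sup>2 + \<bar>u0\<bar>)"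
    using \<open>0 \<le> h\<close> by (intro mult_left_mono) auto
  also have "\<dots> \<le> 2 * e\<^sup>2"
    using assms True by (simp add: hstar_def le_divide_eq add_pos_pos)
  finally show ?thesis .
next
  case False
  then have "h * (1 + \<bar>u0\<^sup>2 - 1\<bar>) \<le> h * 2"
    using \<open>0 \<le> h\<close> by (intro mult_left_mono) (auto simp: abs_square_le_1)
  also have "\<dots> \<le> 2 * e\<^sup>2"
    using assms False by (simp add: hstar_def)
  finally show ?thesis .
qed

lemma crank_nicolson_energy_decreasing:
  fixes e h :: real and u :: "nat \<Rightarrow> real"
  assumes "e \<noteq> 0" "0 < h"
    and small: "h * (1 + \<bar>(u 0)\<^sup>2 - 1\<bar>) \<le> 4 * e\<^sup>2"
    and scheme: "\<And>n. (u (Suc n) - u n) / h + (u (Suc n) ^ 3 - u (Suc n)) / (2 * e\<^sup>2)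
                    + (u n ^ 3 - u n) / (2 * e\<^sup>2) = 0"
  shows "energy e (u (Suc n)) \<le> energy e (u n)"
proof -
  have step: "energy e (u (Suc k)) \<le> energy e (u k)"
    if "energy e (u k) \<le> energy e (u 0)" for k
  proof (rule crank_nicolson_energy_le[OF assms(1,2) scheme])
    have "(u k)\<^sup>2 \<le> 1 + \<bar>(u 0)\<^sup>2 - 1\<bar>"
      using that assms(1) by (simp add: energy_le_iff)
    then have "(u k)\<^sup>2 - (u (Suc k))\<^sup>2 \<le> 1 + \<bar>(u 0)\<^sup>2 - 1\<bar>"
      using zero_le_power2[of "u (Suc k)"] by linarith
    then have "h * ((u k)\<^sup>2 - (u (Suc k))\<^sup>2) \<le> h * (1 + \<bar>(u 0)\<^sup>2 - 1\<bar>)"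
      using \<open>0 < h\<close> by (simp add: mult_left_mono)
    then show "h * ((u k)\<^sup>2 - (u (Suc k))\<^sup>2) \<le> 4 * e\<^sup>2"
      using small by linarith
  qed
  have bounded: "energy e (u k) \<le> energy e (u 0)" for k
  proof (induction k)
    case 0
    show ?case by simp
  next
    case (Suc k)
    then show ?case
      using step[OF Suc.IH] by linarith
  qed
  show ?thesis
    using step[OF bounded] .
qed

theorem theorem3p3:
  fixes \<epsilon> h :: real and u :: "nat \<Rightarrow> real"
  assumes eps: "0 < \<epsilon>" "\<epsilon> < 1"
    and u0: "u 0 \<noteq> 0" "u 0 \<noteq> 1" "u 0 \<noteq> -1"
    and h: "0 < h" "h \<le> hstar \<epsilon> (u 0)"
    and scheme: "\<And>n. n \<ge> 1 \<Longrightarrow>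
       (u n - u (n - 1)) / h + (u n ^ 3 - u n) / (2 * \<epsilon>\<^sup>2)
         + (u (n - 1) ^ 3 - u (n - 1)) / (2 * \<epsilon>\<^sup>2) = 0"
  shows "\<forall>n\<ge>1. energy \<epsilon> (u n) \<le> energy \<epsilon> (u (n - 1))"
proof (intro allI impI)
  fix n :: nat
  assume "n \<ge> 1"
  then obtain k where n: "n = Suc k"
    by (cases n) auto
  have "h * (1 + \<bar>(u 0)\<^sup>2 - 1\<bar>) \<le> 2 * \<epsilon>\<^sup>2"
    using h by (intro hstar_step_bound) auto
  then have small: "h * (1 + \<bar>(u 0)\<^sup>2 - 1\<bar>) \<le> 4 * \<epsilon>\<^sup>2"
    using zero_le_power2[of \<epsilon>] by linarith
  have step: "(u (Suc m) - u m) / h + (u (Suc m) ^ 3 - u (Suc m)) / (2 * \<epsilon>\<^sup>2)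
                + (u m ^ 3 - u m) / (2 * \<epsilon>\<^sup>2) = 0" for m
    using scheme[of "Suc m"] by simp
  have "energy \<epsilon> (u (Suc k)) \<le> energy \<epsilon> (u k)"
    by (rule crank_nicolson_energy_decreasing[OF _ h(1) small step]) (use eps(1) in simp)
  then show "energy \<epsilon> (u n) \<le> energy \<epsilon> (u (n - 1))"
    unfolding n by simp
qed

end
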